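(* Let $d=1$. Then $Z(N)\to1$ in probability (under $Q$) as $N\to\infty$.
   Context: $P^N_0$ is the uniform probability measure on nearest-neighbour walks $\omega:\{0,\dots,N\}\to\mathbb{Z}$ with $\omega(0)=0$, $|\omega(n)-\omega(n-1)|=1$. The environment $h=\{h(n,x):n\in\mathbb{N},x\in\mathbb{Z}\}$ is i.i.d. with $h(n,x)=\pm1$ each with probability $1/2$ on $(H,\mathcal{G},Q)$, independent of the walk. $(c_{N,1})$ is a sequence of positive numbers with $\lim_{N\to\infty}c_{N,1}^2N^{1/2}=0$. $Z(N)=\int\prod_{n=1}^N[1+c_{N,1}h(n,\omega(n))]\,dP^N_0(\omega)$. *)

theory Defs
  imports "HOL-Probability.Probability"
begin

text \<open>Nearest-neighbour walks of length N on the integers started at 0.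
  Walks are represented as functions nat => int, extended by 0 beyond time N
  so that the set of walks is finite and in bijection with the paths.\<close>
definition nn_walks :: "nat \<Rightarrow> (nat \<Rightarrow> int) set" where
  "nn_walks N = {w. w 0 = 0 \<and> (\<forall>n\<in>{1..N}. \<bar>w n - w (n - 1)\<bar> = 1) \<and> (\<forall>n>N. w n = 0)}"

text \<open>Partition function Z(N): integral w.r.t. the uniform measure P_0^N on walks.\<close>
definition partition_Z ::
  "(nat \<Rightarrow> real) \<Rightarrow> (nat \<Rightarrow> int \<Rightarrow> 'a \<Rightarrow> real) \<Rightarrow> nat \<Rightarrow> 'a \<Rightarrow> real" where
  "partition_Z c h N \<eta> =
     (\<Sum>w\<in>nn_walks N. \<Prod>n\<in>{1..N}. (1 + c N * h n (w n) \<eta>)) / real (card (nn_walks N))"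

end

theory Submission
  imports Defs
begin

text \<open>Second moment method. Expanding the square, E[(Z(N) - 1)^2] + 1 is the expectation of
  (1 + c^2)^L over two independent simple random walks, L being their number of collisions up to
  time N. Half the difference of the two walks is a lazy simple random walk, and for the remaining
  time m the function 1 + \<beta> (sqrt (x^2 + m + 1) - |x|) of its position is a supermartingale even
  after multiplying by 1 + c^2 at every visit to 0, as long as c^2 (1 + \<beta> sqrt (N + 2)) \<le> \<beta>/2.
  With \<beta> = 4 c^2 this gives E[(Z(N) - 1)^2] \<le> 4 c^2 sqrt (N + 2) \<longrightarrow> 0, and Chebyshev's
  inequality concludes.\<close>

section \<open>Nearest-neighbour walks\<close>

lemma nn_walks_0: "nn_walks 0 = {\<lambda>_. 0}"
  unfolding nn_walks_def by (auto simp: fun_eq_iff) (metis gr0I)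

lemma nn_walks_Suc:
  "nn_walks (Suc N) = (\<lambda>(w, s). w(Suc N := w N + s)) ` (nn_walks N \<times> {1, -1})"
proof
  show "nn_walks (Suc N) \<subseteq> (\<lambda>(w, s). w(Suc N := w N + s)) ` (nn_walks N \<times> {1, -1})"
  proof
    fix w' assume w': "w' \<in> nn_walks (Suc N)"
    have "\<bar>w' (Suc N) - w' N\<bar> = 1"
      using w' unfolding nn_walks_def by (auto dest!: bspec[of _ _ "Suc N"])
    moreover have "w'(Suc N := 0) \<in> nn_walks N"
      using w' unfolding nn_walks_def by auto
    moreover have "w' = (w'(Suc N := 0))(Suc N := w' N + (w' (Suc N) - w' N))"
      by (auto simp: fun_eq_iff)
    ultimately show "w' \<in> (\<lambda>(w, s). w(Suc N := w N + s)) ` (nn_walks N \<times> {1, -1})"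
      by (intro image_eqI[of _ _ "(w'(Suc N := 0), w' (Suc N) - w' N)"]) (auto simp: abs_if split: if_splits)
  qed
next
  show "(\<lambda>(w, s). w(Suc N := w N + s)) ` (nn_walks N \<times> {1, -1}) \<subseteq> nn_walks (Suc N)"
  proof clarify
    fix w and s :: int assume w: "w \<in> nn_walks N" and s: "s \<in> {1, -1}"
    have "\<bar>(w(Suc N := w N + s)) n - (w(Suc N := w N + s)) (n - 1)\<bar> = 1" if "n \<in> {1..Suc N}" for n
      using that w s by (cases "n = Suc N") (auto simp: nn_walks_def)
    then show "w(Suc N := w N + s) \<in> nn_walks (Suc N)"
      using w by (auto simp: nn_walks_def)
  qed
qed

lemma inj_on_extend_walk:
  "inj_on (\<lambda>(w, s). w(Suc N := w N + s)) (nn_walks N \<times> {1, -1 :: int})"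
proof (rule inj_onI, clarify)
  fix w s v t assume w: "w \<in> nn_walks N" and v: "v \<in> nn_walks N"
    and eq: "w(Suc N := w N + s) = v(Suc N := v N + t)"
  have "w = v"
  proof
    fix n show "w n = v n"
      using w v fun_cong[OF eq, of n] by (cases "n = Suc N") (auto simp: nn_walks_def)
  qed
  with fun_cong[OF eq, of "Suc N"] show "w = v \<and> s = t" by auto
qed

lemma finite_nn_walks: "finite (nn_walks N)"
  by (induction N) (auto simp: nn_walks_0 nn_walks_Suc)

lemma card_nn_walks: "card (nn_walks N) = 2 ^ N"
proof (induction N)
  case 0 then show ?case by (simp add: nn_walks_0)
next
  case (Suc N)
  have "card (nn_walks (Suc N)) = card (nn_walks N \<times> {1::int, -1})"
    unfolding nn_walks_Suc by (rule card_image[OF inj_on_extend_walk])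
  also have "\<dots> = 2 ^ Suc N" using Suc finite_nn_walks by (simp add: card_cartesian_product)
  finally show ?case .
qed

lemma sum_nn_walks_Suc:
  "(\<Sum>w\<in>nn_walks (Suc N). f w) =
     (\<Sum>w\<in>nn_walks N. f (w(Suc N := w N + 1)) + f (w(Suc N := w N - 1)))"
proof -
  have "(\<Sum>w\<in>nn_walks (Suc N). f w) = (\<Sum>(w, s)\<in>nn_walks N \<times> {1, -1}. f (w(Suc N := w N + s)))"
    unfolding nn_walks_Suc by (subst sum.reindex[OF inj_on_extend_walk]) (simp add: case_prod_beta)
  also have "\<dots> = (\<Sum>w\<in>nn_walks N. \<Sum>s\<in>{1::int, -1}. f (w(Suc N := w N + s)))"
    by (rule sum.cartesian_product[symmetric])
  finally show ?thesis by simp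
qed

section \<open>A Lyapunov function for the lazy walk\<close>

text \<open>Transition operator of half the difference of two independent simple random walks: it stays
  put with probability 1/2 and moves by \<plusminus>1 with probability 1/4 each.\<close>
definition lazy_avg :: "(real \<Rightarrow> real) \<Rightarrow> real \<Rightarrow> real" where
  "lazy_avg F x = F x / 2 + F (x + 1) / 4 + F (x - 1) / 4"

definition pinning :: "real \<Rightarrow> real \<Rightarrow> real" where
  "pinning t x = (if x = 0 then 1 + t else 1)"

definition lyapunov :: "real \<Rightarrow> nat \<Rightarrow> real \<Rightarrow> real" where
  "lyapunov \<beta> m x = 1 + \<beta> * (sqrt (x\<^sup>2 + real m + 1) - \<bar>x\<bar>)"

lemma lazy_avg_affine:
  "lazy_avg (\<lambda>y. a + b * (F y - G y)) x = a + b * (lazy_avg F x - lazy_avg G x)"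
  unfolding lazy_avg_def by (simp add: field_simps)

lemma lazy_avg_mono: "(\<And>y. F y \<le> G y) \<Longrightarrow> lazy_avg F x \<le> lazy_avg G x"
  unfolding lazy_avg_def by (intro add_mono divide_right_mono) auto

lemma sqrt_add_le_concave:
  fixes a b :: real
  assumes "a \<ge> 0" "b \<ge> 0"
  shows "sqrt a + sqrt b \<le> 2 * sqrt ((a + b) / 2)"
proof -
  have "(sqrt a + sqrt b)\<^sup>2 \<le> (2 * sqrt ((a + b) / 2))\<^sup>2"
    using assms sum_squares_ge_zero[of "sqrt a - sqrt b" 0]
    by (simp add: power2_eq_square algebra_simps real_sqrt_mult_self)
  then show ?thesis by (rule power2_le_imp_le) (use assms in simp)
qed

lemma lazy_avg_sqrt_le:
  "lazy_avg (\<lambda>y. sqrt (y\<^sup>2 + real m + 1)) x \<le> sqrt (x\<^sup>2 + real (Suc m) + 1)"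
proof -
  have "sqrt ((x + 1)\<^sup>2 + real m + 1) + sqrt ((x - 1)\<^sup>2 + real m + 1)
      \<le> 2 * sqrt (((x + 1)\<^sup>2 + real m + 1 + ((x - 1)\<^sup>2 + real m + 1)) / 2)"
    by (intro sqrt_add_le_concave) auto
  also have "((x + 1)\<^sup>2 + real m + 1 + ((x - 1)\<^sup>2 + real m + 1)) / 2 = x\<^sup>2 + real (Suc m) + 1"
    by (simp add: power2_eq_square algebra_simps)
  finally have "sqrt ((x + 1)\<^sup>2 + real m + 1) + sqrt ((x - 1)\<^sup>2 + real m + 1)
      \<le> 2 * sqrt (x\<^sup>2 + real (Suc m) + 1)" .
  moreover have "sqrt (x\<^sup>2 + real m + 1) \<le> sqrt (x\<^sup>2 + real (Suc m) + 1)"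
    by simp
  ultimately show ?thesis unfolding lazy_avg_def by linarith
qed

lemma lazy_avg_abs_ge: "\<bar>x\<bar> \<le> lazy_avg abs x"
  using abs_triangle_ineq[of "x + 1" "x - 1"] unfolding lazy_avg_def by (simp add: field_simps)

lemma lazy_avg_abs_0: "lazy_avg abs 0 = 1 / 2"
  unfolding lazy_avg_def by simp

lemma lazy_avg_lyapunov:
  "lazy_avg (lyapunov \<beta> m) x =
     1 + \<beta> * (lazy_avg (\<lambda>y. sqrt (y\<^sup>2 + real m + 1)) x - lazy_avg abs x)"
  unfolding lyapunov_def by (rule lazy_avg_affine)

lemma lazy_avg_lyapunov_le:
  assumes "\<beta> \<ge> 0"
  shows "lazy_avg (lyapunov \<beta> m) x \<le> 1 + \<beta> * (sqrt (x\<^sup>2 + real (Suc m) + 1) - lazy_avg abs x)"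
  unfolding lazy_avg_lyapunov
  using assms lazy_avg_sqrt_le[of m x] by (simp add: mult_left_mono)

text \<open>Away from the origin one lazy step does not increase the Lyapunov function on average
  (concavity of the square root, convexity of the absolute value); at the origin the average of
  \<bar>x\<bar> gains 1/2, and the resulting decrease \<beta>/2 pays for the pinning factor 1 + t.\<close>
lemma pinning_lazy_avg_lyapunov_le:
  assumes t: "t \<ge> 0" and \<beta>: "\<beta> \<ge> 0" and small: "t * (1 + \<beta> * sqrt (real m + 2)) \<le> \<beta> / 2"
  shows "pinning t x * lazy_avg (lyapunov \<beta> m) x \<le> lyapunov \<beta> (Suc m) x"
proof (cases "x = 0")
  case False
  have "\<beta> * \<bar>x\<bar> \<le> \<beta> * lazy_avg abs x"
    using lazy_avg_abs_ge \<beta> by (rule mult_left_mono)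
  then show ?thesis
    using False lazy_avg_lyapunov_le[OF \<beta>, of m x]
    by (simp add: pinning_def lyapunov_def algebra_simps)
next
  case True
  have "lazy_avg (lyapunov \<beta> m) 0 \<le> 1 + \<beta> * (sqrt (real m + 2) - 1 / 2)"
    using lazy_avg_lyapunov_le[OF \<beta>, of m 0] by (simp add: lazy_avg_abs_0 ac_simps)
  then have "pinning t x * lazy_avg (lyapunov \<beta> m) x \<le> (1 + t) * (1 + \<beta> * (sqrt (real m + 2) - 1 / 2))"
    using True t by (simp add: pinning_def mult_left_mono)
  also have "\<dots> \<le> 1 + \<beta> * sqrt (real m + 2) - \<beta> / 2 + t * (1 + \<beta> * sqrt (real m + 2))"
    using t \<beta> by (simp add: algebra_simps)
  also have "\<dots> \<le> lyapunov \<beta> (Suc m) x"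
    using True small by (simp add: lyapunov_def ac_simps)
  finally show ?thesis .
qed

section \<open>Collisions of two walks\<close>

definition overlap_weight :: "real \<Rightarrow> nat \<Rightarrow> (nat \<Rightarrow> int) \<Rightarrow> (nat \<Rightarrow> int) \<Rightarrow> real" where
  "overlap_weight t N w v = (\<Prod>n\<in>{1..N}. if w n = v n then 1 + t else 1)"

lemma overlap_weight_nonneg: "t \<ge> 0 \<Longrightarrow> overlap_weight t N w v \<ge> 0"
  unfolding overlap_weight_def by (intro prod_nonneg) auto

lemma overlap_weight_Suc:
  "overlap_weight t (Suc N) (w(Suc N := a)) (v(Suc N := b)) =
     overlap_weight t N w v * pinning t (of_int (a - b) / 2)"
proof -
  have "(\<Prod>n\<in>{1..N}. if (w(Suc N := a)) n = (v(Suc N := b)) n then 1 + t else 1) = overlap_weight t N w v"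
    unfolding overlap_weight_def by (intro prod.cong) auto
  then show ?thesis
    by (simp add: overlap_weight_def pinning_def atLeastAtMostSuc_conv)
qed

lemma lazy_avg_lyapunov_ge_1:
  assumes "\<beta> \<ge> 0"
  shows "1 \<le> lazy_avg (lyapunov \<beta> m) x"
proof -
  have "\<bar>y\<bar> \<le> sqrt (y\<^sup>2 + real m + 1)" for y
    using real_sqrt_le_mono[of "y\<^sup>2" "y\<^sup>2 + real m + 1"] by simp
  with assms have "1 \<le> lyapunov \<beta> m y" for y
    unfolding lyapunov_def by simp
  from this[of x] this[of "x + 1"] this[of "x - 1"] show ?thesis
    unfolding lazy_avg_def by linarith
qed

lemma lazy_avg_lyapunov_0_le:
  assumes "\<beta> \<ge> 0"
  shows "lazy_avg (lyapunov \<beta> K) 0 \<le> 1 + \<beta> * sqrt (real K + 2)"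
proof -
  have "lazy_avg (lyapunov \<beta> K) 0 \<le> 1 + \<beta> * (sqrt (real K + 2) - 1 / 2)"
    using lazy_avg_lyapunov_le[OF assms, of K 0] by (simp add: lazy_avg_abs_0 ac_simps)
  with assms show ?thesis by (simp add: right_diff_distrib)
qed

text \<open>Up to the factor 4^N, this is the expectation over two independent simple random walks of
  their overlap weight up to time N times the averaged Lyapunov function, with the remaining time
  K - N, of their half-difference at time N.\<close>
definition weighted_pair_sum :: "real \<Rightarrow> real \<Rightarrow> nat \<Rightarrow> nat \<Rightarrow> real" where
  "weighted_pair_sum t \<beta> K N =
     (\<Sum>w\<in>nn_walks N. \<Sum>v\<in>nn_walks N.
        overlap_weight t N w v * lazy_avg (lyapunov \<beta> (K - N)) (of_int (w N - v N) / 2))"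

lemma weighted_pair_sum_Suc_le:
  assumes t: "t \<ge> 0" and \<beta>: "\<beta> \<ge> 0" and small: "t * (1 + \<beta> * sqrt (real K + 2)) \<le> \<beta> / 2"
    and "N < K"
  shows "weighted_pair_sum t \<beta> K (Suc N) \<le> 4 * weighted_pair_sum t \<beta> K N"
proof -
  define m where "m = K - Suc N"
  have Suc_m: "K - N = Suc m" using \<open>N < K\<close> by (simp add: m_def)
  have "t * (1 + \<beta> * sqrt (real m + 2)) \<le> t * (1 + \<beta> * sqrt (real K + 2))"
    using t \<beta> by (intro mult_left_mono add_left_mono) (auto simp: m_def)
  with small have small_m: "t * (1 + \<beta> * sqrt (real m + 2)) \<le> \<beta> / 2" by linarith
  define G where "G w v = overlap_weight t (Suc N) w v *
    lazy_avg (lyapunov \<beta> m) (of_int (w (Suc N) - v (Suc N)) / 2)" for w v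
  have "weighted_pair_sum t \<beta> K (Suc N) = (\<Sum>w\<in>nn_walks (Suc N). \<Sum>v\<in>nn_walks (Suc N). G w v)"
    unfolding weighted_pair_sum_def G_def m_def by simp
  also have "\<dots> = (\<Sum>w\<in>nn_walks N. \<Sum>v\<in>nn_walks N.
       G (w(Suc N := w N + 1)) (v(Suc N := v N + 1)) + G (w(Suc N := w N + 1)) (v(Suc N := v N - 1)) +
      (G (w(Suc N := w N - 1)) (v(Suc N := v N + 1)) + G (w(Suc N := w N - 1)) (v(Suc N := v N - 1))))"
    (is "_ = (\<Sum>w\<in>_. \<Sum>v\<in>_. ?extensions w v)")
    by (simp add: sum_nn_walks_Suc sum.distrib)
  also have "\<dots> \<le> (\<Sum>w\<in>nn_walks N. \<Sum>v\<in>nn_walks N.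
      4 * (overlap_weight t N w v * lazy_avg (lyapunov \<beta> (K - N)) (of_int (w N - v N) / 2)))"
  proof (intro sum_mono)
    fix w v
    define x :: real where "x = of_int (w N - v N) / 2"
    have half_diffs: "of_int (w N + 1 - (v N + 1)) / 2 = x" "of_int (w N - 1 - (v N - 1)) / 2 = x"
      "of_int (w N + 1 - (v N - 1)) / 2 = x + 1" "of_int (w N - 1 - (v N + 1)) / 2 = x - 1"
      unfolding x_def by (simp_all add: field_simps)
    have "?extensions w v = 4 * overlap_weight t N w v * lazy_avg (\<lambda>y. pinning t y * lazy_avg (lyapunov \<beta> m) y) x"
      unfolding G_def overlap_weight_Suc fun_upd_same half_diffs
      by (simp add: lazy_avg_def[of "\<lambda>y. pinning t y * _ y"] algebra_simps)
    also have "\<dots> \<le> 4 * overlap_weight t N w v * lazy_avg (lyapunov \<beta> (Suc m)) x"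
      using overlap_weight_nonneg[OF t] pinning_lazy_avg_lyapunov_le[OF t \<beta> small_m]
      by (intro mult_left_mono lazy_avg_mono) auto
    finally show "?extensions w v \<le>
        4 * (overlap_weight t N w v * lazy_avg (lyapunov \<beta> (K - N)) (of_int (w N - v N) / 2))"
      by (simp add: Suc_m x_def)
  qed
  also have "\<dots> = 4 * weighted_pair_sum t \<beta> K N"
    unfolding weighted_pair_sum_def by (simp add: sum_distrib_left)
  finally show ?thesis .
qed

lemma weighted_pair_sum_le:
  assumes t: "t \<ge> 0" and \<beta>: "\<beta> \<ge> 0" and small: "t * (1 + \<beta> * sqrt (real K + 2)) \<le> \<beta> / 2"
  shows "N \<le> K \<Longrightarrow> weighted_pair_sum t \<beta> K N \<le> 4 ^ N * lazy_avg (lyapunov \<beta> K) 0"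
proof (induction N)
  case 0
  then show ?case by (simp add: weighted_pair_sum_def nn_walks_0 overlap_weight_def)
next
  case (Suc N)
  then have "weighted_pair_sum t \<beta> K (Suc N) \<le> 4 * weighted_pair_sum t \<beta> K N"
    by (intro weighted_pair_sum_Suc_le[OF t \<beta> small]) auto
  also have "\<dots> \<le> 4 * (4 ^ N * lazy_avg (lyapunov \<beta> K) 0)"
    using Suc by simp
  finally show ?case by simp
qed

lemma sum_overlap_weight_le:
  assumes t: "t \<ge> 0" and \<beta>: "\<beta> \<ge> 0" and small: "t * (1 + \<beta> * sqrt (real K + 2)) \<le> \<beta> / 2"
  shows "(\<Sum>w\<in>nn_walks K. \<Sum>v\<in>nn_walks K. overlap_weight t K w v) \<le> 4 ^ K * (1 + \<beta> * sqrt (real K + 2))"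
proof -
  have "(\<Sum>w\<in>nn_walks K. \<Sum>v\<in>nn_walks K. overlap_weight t K w v) \<le> weighted_pair_sum t \<beta> K K"
    unfolding weighted_pair_sum_def
    using mult_left_mono[OF lazy_avg_lyapunov_ge_1[OF \<beta>] overlap_weight_nonneg[OF t]]
    by (intro sum_mono) simp
  also have "\<dots> \<le> 4 ^ K * lazy_avg (lyapunov \<beta> K) 0"
    by (rule weighted_pair_sum_le[OF t \<beta> small]) simp
  also have "\<dots> \<le> 4 ^ K * (1 + \<beta> * sqrt (real K + 2))"
    using lazy_avg_lyapunov_0_le[OF \<beta>] by simp
  finally show ?thesis .
qed

section \<open>Second moment of the partition function\<close>

locale rademacher_field = prob_space Q for Q :: "'a measure" +
  fixes g :: "nat \<Rightarrow> int \<Rightarrow> 'a \<Rightarrow> real"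
  assumes indep: "indep_vars (\<lambda>_. borel) (\<lambda>(n, x). g n x) UNIV"
    and sign: "g n x \<eta> = 1 \<or> g n x \<eta> = -1"
    and centred: "expectation (g n x) = 0"
begin

lemma borel_measurable_field [measurable]: "g n x \<in> borel_measurable Q"
  using indep unfolding indep_vars_def by auto

lemma abs_field [simp]: "\<bar>g n x \<eta>\<bar> = 1"
  using sign[of n x \<eta>] by auto

lemma integrable_field [simp]: "integrable Q (g n x)"
  by (rule integrable_const_bound[where B = 1]) auto

lemma integrable_field_mult [simp]: "integrable Q (\<lambda>\<eta>. g n a \<eta> * g m b \<eta>)"
  by (rule integrable_const_bound[where B = 1]) (auto simp: abs_mult)

lemma expectation_field_mult: "expectation (\<lambda>\<eta>. g n a \<eta> * g n b \<eta>) = (if a = b then 1 else 0)"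
proof (cases "a = b")
  case True
  have "g n a \<eta> * g n a \<eta> = 1" for \<eta>
    using sign[of n a \<eta>] by auto
  with True show ?thesis by (simp add: prob_space)
next
  case False
  have pair_indep: "indep_vars (\<lambda>_. borel) (\<lambda>(n, x). g n x) {(n, a), (n, b)}"
    by (rule indep_vars_subset[OF indep]) auto
  have "expectation (\<lambda>\<eta>. \<Prod>i\<in>{(n, a), (n, b)}. (\<lambda>(n, x). g n x) i \<eta>) =
      (\<Prod>i\<in>{(n, a), (n, b)}. expectation ((\<lambda>(n, x). g n x) i))"
    by (rule indep_vars_lebesgue_integral[OF _ pair_indep]) auto
  with False show ?thesis by (simp add: centred)
qed

lemma expectation_pair_factor:
  "expectation (\<lambda>\<eta>. (1 + c1 * g n a \<eta>) * (1 + c2 * g n b \<eta>)) = (if a = b then 1 + c1 * c2 else 1)"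
proof -
  have "(\<lambda>\<eta>. (1 + c1 * g n a \<eta>) * (1 + c2 * g n b \<eta>)) =
      (\<lambda>\<eta>. 1 + c1 * g n a \<eta> + c2 * g n b \<eta> + c1 * c2 * (g n a \<eta> * g n b \<eta>))"
    by (simp add: fun_eq_iff algebra_simps)
  then show ?thesis
    by (simp add: centred expectation_field_mult prob_space)
qed

lemma indep_pair_factors:
  "indep_vars (\<lambda>_. borel) (\<lambda>n \<eta>. (1 + c1 * g n (a n) \<eta>) * (1 + c2 * g n (b n) \<eta>)) L"
proof -
  define K where "K n = {(n, a n), (n, b n)}" for n
  define F where "F n f = (1 + c1 * f (n, a n)) * (1 + c2 * f (n, b n))" for n and f :: "nat \<times> int \<Rightarrow> real"
  have "indep_vars (\<lambda>n. PiM (K n) (\<lambda>_. borel)) (\<lambda>n \<eta>. restrict (\<lambda>i. (\<lambda>(n, x). g n x) i \<eta>) (K n)) L"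
    by (rule indep_vars_restrict[OF indep]) (auto simp: K_def disjoint_family_on_def)
  then have "indep_vars (\<lambda>_. borel) (\<lambda>n \<eta>. F n (restrict (\<lambda>i. (\<lambda>(n, x). g n x) i \<eta>) (K n))) L"
  proof (rule indep_vars_compose2)
    fix n
    have "(\<lambda>f. f (n, a n)) \<in> borel_measurable (PiM (K n) (\<lambda>_. borel))"
      "(\<lambda>f. f (n, b n)) \<in> borel_measurable (PiM (K n) (\<lambda>_. borel))"
      by (auto intro!: measurable_component_singleton simp: K_def)
    then show "F n \<in> borel_measurable (PiM (K n) (\<lambda>_. borel))"
      unfolding F_def by measurable
  qed
  then show ?thesis
    by (simp add: F_def K_def)
qed

lemma
  assumes "finite L"
  shows expectation_prod_pair_factors:
      "expectation (\<lambda>\<eta>. \<Prod>n\<in>L. (1 + c1 * g n (a n) \<eta>) * (1 + c2 * g n (b n) \<eta>)) =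
         (\<Prod>n\<in>L. if a n = b n then 1 + c1 * c2 else 1)"
    and integrable_prod_pair_factors:
      "integrable Q (\<lambda>\<eta>. \<Prod>n\<in>L. (1 + c1 * g n (a n) \<eta>) * (1 + c2 * g n (b n) \<eta>))"
proof -
  have "integrable Q (\<lambda>\<eta>. (1 + c1 * g n a \<eta>) * (1 + c2 * g n b \<eta>))" for n a b
    by (simp add: algebra_simps)
  then show "expectation (\<lambda>\<eta>. \<Prod>n\<in>L. (1 + c1 * g n (a n) \<eta>) * (1 + c2 * g n (b n) \<eta>)) =
         (\<Prod>n\<in>L. if a n = b n then 1 + c1 * c2 else 1)"
    and "integrable Q (\<lambda>\<eta>. \<Prod>n\<in>L. (1 + c1 * g n (a n) \<eta>) * (1 + c2 * g n (b n) \<eta>))"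
    using indep_vars_lebesgue_integral[OF assms indep_pair_factors]
      indep_vars_integrable[OF assms indep_pair_factors]
    by (simp_all add: expectation_pair_factor)
qed

definition walk_weight :: "real \<Rightarrow> nat \<Rightarrow> (nat \<Rightarrow> int) \<Rightarrow> 'a \<Rightarrow> real" where
  "walk_weight \<gamma> N w \<eta> = (\<Prod>n\<in>{1..N}. 1 + \<gamma> * g n (w n) \<eta>)"

lemma
  shows integrable_walk_weight_mult: "integrable Q (\<lambda>\<eta>. walk_weight \<gamma> N w \<eta> * walk_weight \<gamma> N v \<eta>)"
    and expectation_walk_weight_mult:
      "expectation (\<lambda>\<eta>. walk_weight \<gamma> N w \<eta> * walk_weight \<gamma> N v \<eta>) = overlap_weight (\<gamma>\<^sup>2) N w v"
  using integrable_prod_pair_factors[of "{1..N}" \<gamma> w \<gamma> v]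
    expectation_prod_pair_factors[of "{1..N}" \<gamma> w \<gamma> v]
  by (simp_all add: walk_weight_def overlap_weight_def prod.distrib power2_eq_square)

lemma
  shows integrable_walk_weight: "integrable Q (walk_weight \<gamma> N w)"
    and expectation_walk_weight: "expectation (walk_weight \<gamma> N w) = 1"
  using integrable_prod_pair_factors[of "{1..N}" \<gamma> w 0 w]
    expectation_prod_pair_factors[of "{1..N}" \<gamma> w 0 w]
  by (simp_all add: walk_weight_def[abs_def])

lemma
  fixes c :: "nat \<Rightarrow> real"
  shows integrable_partition_Z_deviation_sq: "integrable Q (\<lambda>\<eta>. (partition_Z c g N \<eta> - 1)\<^sup>2)"
    and expectation_partition_Z_deviation_sq:
      "expectation (\<lambda>\<eta>. (partition_Z c g N \<eta> - 1)\<^sup>2) =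
         (\<Sum>w\<in>nn_walks N. \<Sum>v\<in>nn_walks N. overlap_weight ((c N)\<^sup>2) N w v) / 4 ^ N - 1"
proof -
  define W where "W = nn_walks N"
  define R where "R = walk_weight (c N) N"
  define F where "F w v \<eta> = R w \<eta> * R v \<eta> - R w \<eta> - R v \<eta> + 1" for w v \<eta>
  have A: "real (card W) = 2 ^ N"
    by (simp add: W_def card_nn_walks)
  have four: "(2 ^ N * 2 ^ N :: real) = 4 ^ N"
    by (simp add: power_mult_distrib[symmetric])
  have "partition_Z c g N \<eta> - 1 = (\<Sum>w\<in>W. R w \<eta> - 1) / 2 ^ N" for \<eta>
    by (simp add: partition_Z_def R_def walk_weight_def W_def[symmetric] A sum_subtractf diff_divide_distrib)
  moreover have "(\<Sum>w\<in>W. R w \<eta> - 1) * (\<Sum>v\<in>W. R v \<eta> - 1) = (\<Sum>w\<in>W. \<Sum>v\<in>W. F w v \<eta>)" for \<eta>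
    by (simp add: sum_product F_def algebra_simps)
  ultimately have sq: "(partition_Z c g N \<eta> - 1)\<^sup>2 = (\<Sum>w\<in>W. \<Sum>v\<in>W. F w v \<eta>) / 4 ^ N" for \<eta>
    by (simp add: power2_eq_square four)
  have integrable_F: "integrable Q (F w v)" for w v
    unfolding F_def[abs_def] R_def
    by (intro Bochner_Integration.integrable_add Bochner_Integration.integrable_diff integrable_const
        integrable_walk_weight_mult integrable_walk_weight)
  have expectation_F: "expectation (F w v) = overlap_weight ((c N)\<^sup>2) N w v - 1" for w v
    unfolding F_def[abs_def] R_def
    by (simp add: integrable_walk_weight_mult integrable_walk_weight expectation_walk_weight_mult
        expectation_walk_weight prob_space)
  show "integrable Q (\<lambda>\<eta>. (partition_Z c g N \<eta> - 1)\<^sup>2)"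
    unfolding sq using integrable_F by simp
  have "expectation (\<lambda>\<eta>. (partition_Z c g N \<eta> - 1)\<^sup>2) = (\<Sum>w\<in>W. \<Sum>v\<in>W. expectation (F w v)) / 4 ^ N"
    unfolding sq using integrable_F by (simp add: Bochner_Integration.integral_sum)
  also have "\<dots> = (\<Sum>w\<in>W. \<Sum>v\<in>W. overlap_weight ((c N)\<^sup>2) N w v) / 4 ^ N - 1"
    by (simp add: expectation_F sum_subtractf A diff_divide_distrib four)
  finally show "expectation (\<lambda>\<eta>. (partition_Z c g N \<eta> - 1)\<^sup>2) =
      (\<Sum>w\<in>nn_walks N. \<Sum>v\<in>nn_walks N. overlap_weight ((c N)\<^sup>2) N w v) / 4 ^ N - 1"
    by (simp add: W_def)
qed

end

section \<open>Convergence in probability\<close>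

lemma borel_measurable_partition_Z [measurable]:
  "(\<And>n x. h n x \<in> borel_measurable M) \<Longrightarrow> partition_Z c h N \<in> borel_measurable M"
  unfolding partition_Z_def
  by (intro borel_measurable_divide borel_measurable_sum borel_measurable_prod borel_measurable_add
      borel_measurable_times borel_measurable_const)

lemma tendsto_sq_mult_sqrt_add_2:
  fixes c :: "nat \<Rightarrow> real"
  assumes "(\<lambda>N. (c N)\<^sup>2 * sqrt (real N)) \<longlonglongrightarrow> 0"
  shows "(\<lambda>N. (c N)\<^sup>2 * sqrt (real N + 2)) \<longlonglongrightarrow> 0"
proof (rule tendsto_sandwich[of "\<lambda>_. 0" _ _ "\<lambda>N. sqrt 3 * ((c N)\<^sup>2 * sqrt (real N))"])
  show "\<forall>\<^sub>F N in sequentially. (c N)\<^sup>2 * sqrt (real N + 2) \<le> sqrt 3 * ((c N)\<^sup>2 * sqrt (real N))"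
    using eventually_ge_at_top[of "1::nat"]
  proof eventually_elim
    case (elim N)
    then have "sqrt (real N + 2) \<le> sqrt 3 * sqrt (real N)"
      by (simp flip: real_sqrt_mult)
    then have "(c N)\<^sup>2 * sqrt (real N + 2) \<le> (c N)\<^sup>2 * (sqrt 3 * sqrt (real N))"
      by (rule mult_left_mono) simp
    then show ?case
      by (simp add: ac_simps)
  qed
  show "(\<lambda>N. sqrt 3 * ((c N)\<^sup>2 * sqrt (real N))) \<longlonglongrightarrow> 0"
    using tendsto_mult_right_zero[OF assms] by simp
qed auto

context rademacher_field
begin

lemma prob_partition_Z_deviation_le:
  fixes c :: "nat \<Rightarrow> real"
  assumes "\<epsilon> > 0" and small: "4 * (c N)\<^sup>2 * sqrt (real N + 2) \<le> 1"
  shows "prob {\<eta> \<in> space Q. \<bar>partition_Z c g N \<eta> - 1\<bar> > \<epsilon>} \<le> 4 * (c N)\<^sup>2 * sqrt (real N + 2) / \<epsilon>\<^sup>2"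
proof -
  define t where "t = (c N)\<^sup>2"
  have "t * (1 + 4 * t * sqrt (real N + 2)) \<le> t * 2"
    using small by (intro mult_left_mono) (auto simp: t_def)
  then have "(\<Sum>w\<in>nn_walks N. \<Sum>v\<in>nn_walks N. overlap_weight t N w v) \<le> 4 ^ N * (1 + 4 * t * sqrt (real N + 2))"
    by (intro sum_overlap_weight_le) (auto simp: t_def)
  then have moment: "expectation (\<lambda>\<eta>. (partition_Z c g N \<eta> - 1)\<^sup>2) \<le> 4 * t * sqrt (real N + 2)"
    by (simp add: expectation_partition_Z_deviation_sq t_def[symmetric] field_simps)
  have "prob {\<eta> \<in> space Q. \<bar>partition_Z c g N \<eta> - 1\<bar> > \<epsilon>} \<le> prob {\<eta> \<in> space Q. \<bar>partition_Z c g N \<eta> - 1\<bar> \<ge> \<epsilon>}"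
    by (intro finite_measure_mono) auto
  also have "\<dots> \<le> expectation (\<lambda>\<eta>. (partition_Z c g N \<eta> - 1)\<^sup>2) / \<epsilon>\<^sup>2"
    using \<open>\<epsilon> > 0\<close> integrable_partition_Z_deviation_sq by (intro second_moment_method) auto
  also have "\<dots> \<le> 4 * (c N)\<^sup>2 * sqrt (real N + 2) / \<epsilon>\<^sup>2"
    using moment by (simp add: t_def divide_right_mono)
  finally show ?thesis .
qed

lemma partition_Z_tendsto_1_in_prob:
  fixes c :: "nat \<Rightarrow> real"
  assumes "(\<lambda>N. (c N)\<^sup>2 * sqrt (real N)) \<longlonglongrightarrow> 0" and "\<epsilon> > 0"
  shows "(\<lambda>N. prob {\<eta> \<in> space Q. \<bar>partition_Z c g N \<eta> - 1\<bar> > \<epsilon>}) \<longlonglongrightarrow> 0"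
proof (rule tendsto_sandwich[of "\<lambda>_. 0" _ _ "\<lambda>N. 4 * (c N)\<^sup>2 * sqrt (real N + 2) / \<epsilon>\<^sup>2"])
  have bound_to_0: "(\<lambda>N. 4 * (c N)\<^sup>2 * sqrt (real N + 2)) \<longlonglongrightarrow> 0"
    using tendsto_mult_right_zero[OF tendsto_sq_mult_sqrt_add_2[OF assms(1)], of 4]
    by (simp add: mult.assoc)
  then have "\<forall>\<^sub>F N in sequentially. 4 * (c N)\<^sup>2 * sqrt (real N + 2) \<le> 1"
    using order_tendstoD(2)[OF bound_to_0, of 1] by (auto elim: eventually_mono)
  then show "\<forall>\<^sub>F N in sequentially. prob {\<eta> \<in> space Q. \<bar>partition_Z c g N \<eta> - 1\<bar> > \<epsilon>}
      \<le> 4 * (c N)\<^sup>2 * sqrt (real N + 2) / \<epsilon>\<^sup>2"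
    by eventually_elim (rule prob_partition_Z_deviation_le[OF \<open>\<epsilon> > 0\<close>])
  show "(\<lambda>N. 4 * (c N)\<^sup>2 * sqrt (real N + 2) / \<epsilon>\<^sup>2) \<longlonglongrightarrow> 0"
    using tendsto_divide_zero[OF bound_to_0] by simp
qed auto

end

lemma rademacher_field_sign:
  fixes h :: "nat \<Rightarrow> int \<Rightarrow> 'a \<Rightarrow> real"
  assumes "prob_space Q"
    and indep: "prob_space.indep_vars Q (\<lambda>_. borel) (\<lambda>(n, x). h n x) UNIV"
    and half: "\<And>n x. prob_space.prob Q {\<eta> \<in> space Q. h n x \<eta> = 1} = 1/2"
  shows "rademacher_field Q (\<lambda>n x \<eta>. if h n x \<eta> = 1 then 1 else -1)"
proof -
  interpret prob_space Q by fact
  have [measurable]: "h n x \<in> borel_measurable Q" for n x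
    using indep unfolding indep_vars_def by auto
  have "indep_vars (\<lambda>_. borel) (\<lambda>i \<eta>. (\<lambda>r::real. if r = 1 then 1 else -1 :: real) ((\<lambda>(n, x). h n x) i \<eta>)) UNIV"
    by (rule indep_vars_compose2[OF indep]) measurable
  then have "indep_vars (\<lambda>_. borel) (\<lambda>(n, x) \<eta>. if h n x \<eta> = 1 then 1 else -1 :: real) UNIV"
    by (simp add: case_prod_beta')
  moreover have "expectation (\<lambda>\<eta>. if h n x \<eta> = 1 then 1 else -1 :: real) = 0" for n x
  proof -
    let ?S = "{\<eta> \<in> space Q. h n x \<eta> = 1}"
    have [measurable]: "?S \<in> sets Q" by measurable
    have "expectation (\<lambda>\<eta>. if h n x \<eta> = 1 then 1 else -1 :: real) = expectation (\<lambda>\<eta>. 2 * indicator ?S \<eta> - 1)"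
      by (intro Bochner_Integration.integral_cong) (auto simp: indicator_def)
    also have "\<dots> = 2 * prob ?S - 1"
      by (subst Bochner_Integration.integral_diff) (auto simp: prob_space emeasure_eq_measure)
    finally show ?thesis
      by (simp add: half)
  qed
  ultimately show ?thesis
    by unfold_locales (auto simp: split_beta')
qed

lemma AE_two_valued:
  assumes "prob_space Q" and [measurable]: "f \<in> borel_measurable Q"
    and "prob_space.prob Q {\<eta> \<in> space Q. f \<eta> = a} + prob_space.prob Q {\<eta> \<in> space Q. f \<eta> = b} = 1"
    and "a \<noteq> (b :: real)"
  shows "AE \<eta> in Q. f \<eta> = a \<or> f \<eta> = b"
proof -
  interpret prob_space Q by fact
  have "prob ({\<eta> \<in> space Q. f \<eta> = a} \<union> {\<eta> \<in> space Q. f \<eta> = b}) = 1"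
    using assms(3-4) by (subst finite_measure_Union) auto
  then have "AE \<eta> in Q. \<eta> \<in> {\<eta> \<in> space Q. f \<eta> = a} \<union> {\<eta> \<in> space Q. f \<eta> = b}"
    by (intro AE_prob_1)
  then show ?thesis
    by eventually_elim auto
qed

lemma AE_partition_Z_eq_sign:
  assumes "prob_space Q" and [measurable]: "\<And>n x. h n x \<in> borel_measurable Q"
    and "\<And>n x. prob_space.prob Q {\<eta> \<in> space Q. h n x \<eta> = 1} = 1/2"
    and "\<And>n x. prob_space.prob Q {\<eta> \<in> space Q. h n x \<eta> = -1} = 1/2"
  shows "AE \<eta> in Q. partition_Z c h N \<eta> = partition_Z c (\<lambda>n x \<eta>. if h n x \<eta> = 1 then 1 else -1) N \<eta>"
proof -
  have "AE \<eta> in Q. h n x \<eta> = 1 \<or> h n x \<eta> = -1" for n x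
    by (intro AE_two_valued assms(1)) (simp_all add: assms(3,4))
  then have "AE \<eta> in Q. \<forall>n x. h n x \<eta> = (if h n x \<eta> = 1 then 1 else -1)"
    unfolding AE_all_countable by (metis (mono_tags, lifting) eventually_mono)
  then show ?thesis
    by eventually_elim (simp add: partition_Z_def)
qed

theorem lemma14:
  fixes Q :: "'a measure" and h :: "nat \<Rightarrow> int \<Rightarrow> 'a \<Rightarrow> real" and c :: "nat \<Rightarrow> real"
  assumes "prob_space Q"
    and "prob_space.indep_vars Q (\<lambda>_. borel) (\<lambda>(n, x). h n x) UNIV"
    and "\<And>n x. prob_space.prob Q {\<eta> \<in> space Q. h n x \<eta> = 1} = 1/2"
    and "\<And>n x. prob_space.prob Q {\<eta> \<in> space Q. h n x \<eta> = -1} = 1/2"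
    and "\<And>N. c N > 0"
    and "(\<lambda>N. (c N)\<^sup>2 * sqrt (real N)) \<longlonglongrightarrow> 0"
  shows "\<forall>\<epsilon>>0. (\<lambda>N. prob_space.prob Q {\<eta> \<in> space Q. \<bar>partition_Z c h N \<eta> - 1\<bar> > \<epsilon>})
            \<longlonglongrightarrow> 0"
proof (intro allI impI)
  fix \<epsilon> :: real assume "\<epsilon> > 0"
  define g where "g = (\<lambda>n x \<eta>. if h n x \<eta> = 1 then 1 else -1 :: real)"
  interpret rademacher_field Q g
    unfolding g_def using assms(1-3) by (rule rademacher_field_sign)
  have h_measurable [measurable]: "h n x \<in> borel_measurable Q" for n x
    using assms(2) unfolding indep_vars_def by auto
  have Z_eq: "AE \<eta> in Q. partition_Z c h N \<eta> = partition_Z c g N \<eta>" for N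
    unfolding g_def using assms(1) h_measurable assms(3,4) by (rule AE_partition_Z_eq_sign)
  have "prob {\<eta> \<in> space Q. \<bar>partition_Z c h N \<eta> - 1\<bar> > \<epsilon>} =
      prob {\<eta> \<in> space Q. \<bar>partition_Z c g N \<eta> - 1\<bar> > \<epsilon>}" for N
  proof (rule measure_eq_AE)
    show "AE \<eta> in Q. \<eta> \<in> {\<eta> \<in> space Q. \<bar>partition_Z c h N \<eta> - 1\<bar> > \<epsilon>} \<longleftrightarrow>
        \<eta> \<in> {\<eta> \<in> space Q. \<bar>partition_Z c g N \<eta> - 1\<bar> > \<epsilon>}"
      using Z_eq[of N] by eventually_elim auto
  qed measurable
  with partition_Z_tendsto_1_in_prob[OF assms(6) \<open>\<epsilon> > 0\<close>]
  show "(\<lambda>N. prob {\<eta> \<in> space Q. \<bar>partition_Z c h N \<eta> - 1\<bar> > \<epsilon>}) \<longlonglongrightarrow> 0"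
    by simp
qed

end
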